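(* Let $Q\in\mathbb{R}^{n\times n}$ be symmetric positive definite, $A\in\mathbb{R}^{m\times n}$ with no zero rows, $b\in\mathbb{R}^m$, $c\in\mathbb{R}^n$, and suppose the problem $P(Q,A,b,c)$: $\min_{x\in\mathbb{R}^n}\frac12 x^\intercal Qx+c^\intercal x$ s.t. $Ax\preceq b$ is feasible, with optimal solution $x^\ast$. Let $\mu^\ast$ be an optimal solution of the dual problem $\max_{\mu\succeq 0} g(\mu)$, where $g(\mu)=-\frac12(A^\intercal\mu+c)^\intercal Q^{-1}(A^\intercal\mu+c)-\mu^\intercal b$, and let $t:=\operatorname{sign}(\mu^\ast+\nabla g(\mu^\ast))\in\{+1,-1,0\}^m$ (componentwise), where $\nabla g(\mu)=-AQ^{-1}(A^\intercal\mu+c)-b$. Suppose an adversary (the target node) knows $A$, $Q$, $x^\ast$ and $t$. Then $c$ cannot be uniquely retrieved by the adversary — i.e., there exist $c'\in\mathbb{R}^n$ with $c'\neq c$, $b'\in\mathbb{R}^m$, and an optimal solution $\mu'$ of the dual of $P(Q,A,b',c')$ (dual function $g'$ defined as $g$ with $b',c'$ in place of $b,c$) such that $x^\ast$ is the optimal solution of $P(Q,A,b',c')$ and $\operatorname{sign}(\mu'+\nabla g'(\mu'))=t$ — if and only if $t_i>0$ for some $i\in\{1,\dots,m\}$.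
   Context: Vector inequalities $\preceq,\succeq$ are element-wise. The paper's notion of non-unique retrieval: a private input cannot be uniquely retrieved by an adversary if there are at least two values of it, each consistent (together with some values of the other data unknown to the adversary) with everything the adversary knows; the claim makes this explicit for the knowledge $(A,Q,x^\ast,t)$. *)

theory Defs
  imports "HOL-Analysis.Analysis"
begin

definition sym_pos_def_mat :: "real^'n^'n \<Rightarrow> bool" where
  "sym_pos_def_mat Q \<longleftrightarrow> transpose Q = Q \<and> (\<forall>x. x \<noteq> 0 \<longrightarrow> x \<bullet> (Q *v x) > 0)"

definition no_zero_rows :: "real^'n^'m \<Rightarrow> bool" where
  "no_zero_rows A \<longleftrightarrow> (\<forall>i. row i A \<noteq> 0)"

definition qp_obj :: "real^'n^'n \<Rightarrow> real^'n \<Rightarrow> real^'n \<Rightarrow> real" where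
  "qp_obj Q c x = (1/2) * (x \<bullet> (Q *v x)) + c \<bullet> x"

definition qp_feasible :: "real^'n^'m \<Rightarrow> real^'m \<Rightarrow> real^'n \<Rightarrow> bool" where
  "qp_feasible A b x \<longleftrightarrow> (\<forall>i. (A *v x) $ i \<le> b $ i)"

definition qp_optimal :: "real^'n^'n \<Rightarrow> real^'n^'m \<Rightarrow> real^'m \<Rightarrow> real^'n \<Rightarrow> real^'n \<Rightarrow> bool" where
  "qp_optimal Q A b c x \<longleftrightarrow> qp_feasible A b x \<and>
     (\<forall>y. qp_feasible A b y \<longrightarrow> qp_obj Q c x \<le> qp_obj Q c y)"

definition dual_fun :: "real^'n^'n \<Rightarrow> real^'n^'m \<Rightarrow> real^'m \<Rightarrow> real^'n \<Rightarrow> real^'m \<Rightarrow> real" where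
  "dual_fun Q A b c mu =
     - (1/2) * ((transpose A *v mu + c) \<bullet> (matrix_inv Q *v (transpose A *v mu + c))) - mu \<bullet> b"

definition dual_grad :: "real^'n^'n \<Rightarrow> real^'n^'m \<Rightarrow> real^'m \<Rightarrow> real^'n \<Rightarrow> real^'m \<Rightarrow> real^'m" where
  "dual_grad Q A b c mu = - (A *v (matrix_inv Q *v (transpose A *v mu + c))) - b"

definition nonneg_vec :: "real^'m \<Rightarrow> bool" where
  "nonneg_vec mu \<longleftrightarrow> (\<forall>i. 0 \<le> mu $ i)"

definition dual_optimal :: "real^'n^'n \<Rightarrow> real^'n^'m \<Rightarrow> real^'m \<Rightarrow> real^'n \<Rightarrow> real^'m \<Rightarrow> bool" where
  "dual_optimal Q A b c mu \<longleftrightarrow> nonneg_vec mu \<and>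
     (\<forall>nu. nonneg_vec nu \<longrightarrow> dual_fun Q A b c nu \<le> dual_fun Q A b c mu)"

definition vsign :: "real^'m \<Rightarrow> real^'m" where
  "vsign v = (\<chi> i. sgn (v $ i))"

end

theory Submission
  imports Defs
begin

text \<open>Since \<open>Q\<close> is positive definite, the dual problem is a concave quadratic over the
  nonnegative orthant, so \<open>\<mu>\<close> is dual optimal iff \<open>\<mu> \<succeq> 0\<close>, \<open>\<nabla>g(\<mu>) \<preceq> 0\<close> and
  \<open>\<mu>\<^sub>i \<nabla>g(\<mu>)\<^sub>i = 0\<close>. These are the KKT conditions of the primal problem with multiplier \<open>\<mu>\<close>,
  so the unique primal optimum is \<open>x\<^sup>* = -Q\<^sup>-\<^sup>1(A\<^sup>T\<mu> + c)\<close>, and \<open>t\<^sub>i > 0\<close> exactly when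
  \<open>\<mu>\<^sub>i > 0\<close>. If \<open>\<mu>\<^sub>i > 0\<close>, replacing \<open>\<mu>\<close> by \<open>\<mu> + e\<^sub>i\<close> and \<open>c\<close> by \<open>c - A\<^sup>Te\<^sub>i\<close> leaves
  \<open>A\<^sup>T\<mu> + c\<close>, hence \<open>x\<^sup>*\<close>, \<open>\<nabla>g\<close> and \<open>t\<close>, unchanged, while \<open>c\<close> changes because row \<open>i\<close> of
  \<open>A\<close> is nonzero. If no \<open>t\<^sub>i\<close> is positive, then \<open>\<mu> = 0\<close> and \<open>c = -Qx\<^sup>*\<close> is determined.\<close>

lemma matrix_mul_matrix_inv:
  fixes A :: "'a::semiring_1^'n^'m"
  assumes "invertible A"
  shows "A ** matrix_inv A = mat 1" and "matrix_inv A ** A = mat 1"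
  using someI_ex[OF assms[unfolded invertible_def]] unfolding matrix_inv_def by blast+

lemma sym_pos_def_mat_invertible:
  assumes "sym_pos_def_mat Q"
  shows "invertible Q"
proof -
  have "x = 0" if "Q *v x = 0" for x
    using assms that unfolding sym_pos_def_mat_def by (metis inner_zero_right less_irrefl)
  then show ?thesis
    using matrix_left_invertible_ker invertible_left_inverse by blast
qed

lemma sym_pos_def_mat_inv_cancel:
  "sym_pos_def_mat Q \<Longrightarrow> Q *v (matrix_inv Q *v v) = v"
  by (simp add: matrix_vector_mul_assoc matrix_mul_matrix_inv sym_pos_def_mat_invertible)

lemma sym_pos_def_mat_matrix_inv:
  assumes Q: "sym_pos_def_mat Q"
  shows "sym_pos_def_mat (matrix_inv Q)"
proof -
  let ?P = "matrix_inv Q"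
  have QP: "Q ** ?P = mat 1"
    using matrix_mul_matrix_inv sym_pos_def_mat_invertible[OF Q] by blast
  have "transpose ?P ** Q = mat 1"
    using Q QP unfolding sym_pos_def_mat_def by (metis matrix_transpose_mul transpose_mat)
  then have "transpose ?P = ?P"
    using QP by (metis matrix_mul_assoc matrix_mul_lid matrix_mul_rid)
  moreover have "x \<bullet> (?P *v x) > 0" if "x \<noteq> 0" for x
  proof -
    have "?P *v x \<noteq> 0"
      using sym_pos_def_mat_inv_cancel[OF Q, of x] that by auto
    then have "0 < (?P *v x) \<bullet> (Q *v (?P *v x))"
      using Q unfolding sym_pos_def_mat_def by blast
    then show ?thesis
      by (simp add: sym_pos_def_mat_inv_cancel[OF Q] inner_commute)
  qed
  ultimately show ?thesis
    unfolding sym_pos_def_mat_def by blast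
qed

lemma inner_matrix_vector_transpose:
  "((A::real^'n^'m) *v x) \<bullet> y = x \<bullet> (transpose A *v y)"
  by (metis dot_lmul_matrix inner_commute transpose_matrix_vector)

lemma transpose_matrix_vector_axis:
  "transpose (A::real^'n^'m) *v axis i 1 = row i A"
  by (simp only: matrix_vector_mult_basis column_transpose)

lemma symmetric_matrix_inner_commute:
  "transpose (M::real^'n^'n) = M \<Longrightarrow> x \<bullet> (M *v y) = (M *v x) \<bullet> y"
  by (metis inner_matrix_vector_transpose)

lemma sym_pos_def_mat_nonneg:
  "sym_pos_def_mat M \<Longrightarrow> 0 \<le> x \<bullet> (M *v x)"
  unfolding sym_pos_def_mat_def by (metis inner_zero_left less_eq_real_def)

text \<open>The minimiser of the Lagrangian \<open>1/2 x\<^sup>TQx + c\<^sup>Tx + \<mu>\<^sup>T(Ax - b)\<close> over \<open>x\<close>.\<close>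
definition dual_to_primal :: "real^'n^'n \<Rightarrow> real^'n^'m \<Rightarrow> real^'n \<Rightarrow> real^'m \<Rightarrow> real^'n" where
  "dual_to_primal Q A c mu = - (matrix_inv Q *v (transpose A *v mu + c))"

definition dual_kkt :: "real^'n^'n \<Rightarrow> real^'n^'m \<Rightarrow> real^'m \<Rightarrow> real^'n \<Rightarrow> real^'m \<Rightarrow> bool" where
  "dual_kkt Q A b c mu \<longleftrightarrow> nonneg_vec mu \<and> (\<forall>i. dual_grad Q A b c mu $ i \<le> 0)
     \<and> (\<forall>i. mu $ i * dual_grad Q A b c mu $ i = 0)"

lemma dual_kkt_complementary:
  "dual_kkt Q A b c mu \<Longrightarrow> dual_grad Q A b c mu \<bullet> mu = 0"
  unfolding dual_kkt_def inner_vec_def by (simp add: mult.commute sum.neutral)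

lemma dual_grad_eq_residual:
  "dual_grad Q A b c mu = A *v dual_to_primal Q A c mu - b"
  by (simp add: dual_grad_def dual_to_primal_def vec.neg)

lemma matrix_vector_mult_dual_to_primal:
  "sym_pos_def_mat Q \<Longrightarrow> Q *v dual_to_primal Q A c mu = - (transpose A *v mu + c)"
  by (simp add: dual_to_primal_def vec.neg sym_pos_def_mat_inv_cancel)

lemma dual_fun_expansion:
  fixes Q :: "real^'n^'n" and A :: "real^'n^'m"
  assumes "sym_pos_def_mat Q"
  shows "dual_fun Q A b c nu = dual_fun Q A b c mu + dual_grad Q A b c mu \<bullet> (nu - mu)
     - (1/2) * ((transpose A *v (nu - mu)) \<bullet> (matrix_inv Q *v (transpose A *v (nu - mu))))"
proof -
  define P where "P = matrix_inv Q"
  define w where "w = transpose A *v mu + c"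
  define d where "d = transpose A *v (nu - mu)"
  have nu: "transpose A *v nu + c = w + d"
    unfolding w_def d_def by (simp add: matrix_vector_mult_diff_distrib)
  have P_commute: "w \<bullet> (P *v d) = d \<bullet> (P *v w)"
    using assms sym_pos_def_mat_matrix_inv symmetric_matrix_inner_commute inner_commute
    unfolding P_def sym_pos_def_mat_def by metis
  have grad: "dual_grad Q A b c mu \<bullet> (nu - mu) = - ((P *v w) \<bullet> d) - b \<bullet> (nu - mu)"
    unfolding dual_grad_def P_def[symmetric] w_def[symmetric] d_def
    by (simp add: inner_diff_left inner_matrix_vector_transpose)
  show ?thesis
    unfolding dual_fun_def P_def[symmetric] w_def[symmetric] nu grad d_def[symmetric]
    by (simp add: P_commute inner_commute algebra_simps)
qed

lemma dual_fun_axis_step: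
  fixes Q :: "real^'n^'n" and A :: "real^'n^'m"
  assumes "sym_pos_def_mat Q"
  shows "dual_fun Q A b c (mu + s *\<^sub>R axis i 1) = dual_fun Q A b c mu + s * dual_grad Q A b c mu $ i
     - s\<^sup>2 / 2 * (row i A \<bullet> (matrix_inv Q *v row i A))"
  using dual_fun_expansion[OF assms, of A b c "mu + s *\<^sub>R axis i 1" mu]
  by (simp del: transpose_matrix_vector
      add: transpose_matrix_vector_axis matrix_vector_mult_scaleR inner_axis power2_eq_square)

lemma nonpos_if_le_quadratic:
  fixes g K m :: real
  assumes "0 \<le> K" "0 < m" and le: "\<And>s. 0 < s \<Longrightarrow> s \<le> m \<Longrightarrow> s * g \<le> s\<^sup>2 / 2 * K"
  shows "g \<le> 0"
proof (rule ccontr)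
  assume "\<not> g \<le> 0"
  define s where "s = min m (g / (K + 1))"
  have "0 < s" "s \<le> g / (K + 1)"
    using assms \<open>\<not> g \<le> 0\<close> by (auto simp: s_def)
  have "g \<le> s / 2 * K"
    using le[of s] \<open>0 < s\<close> by (simp add: s_def power2_eq_square field_simps)
  also have "\<dots> \<le> g / (K + 1) / 2 * K"
    using \<open>s \<le> g / (K + 1)\<close> \<open>0 \<le> K\<close> by (intro mult_right_mono divide_right_mono) simp_all
  also have "\<dots> < g"
    using \<open>\<not> g \<le> 0\<close> \<open>0 \<le> K\<close> by (simp add: field_simps add_nonneg_pos)
  finally show False by simp
qed

lemma dual_optimal_imp_dual_kkt:
  assumes Q: "sym_pos_def_mat Q" and opt: "dual_optimal Q A b c mu"
  shows "dual_kkt Q A b c mu"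
proof -
  let ?g = "dual_grad Q A b c mu"
  define K where "K i = row i A \<bullet> (matrix_inv Q *v row i A)" for i
  have K: "0 \<le> K i" for i
    unfolding K_def by (rule sym_pos_def_mat_nonneg[OF sym_pos_def_mat_matrix_inv[OF Q]])
  have mu: "nonneg_vec mu"
    using opt unfolding dual_optimal_def by blast
  txt \<open>Moving \<open>\<mu>\<close> along \<open>e\<^sub>i\<close> stays dual feasible for all \<open>s \<ge> -\<mu>\<^sub>i\<close>: positive steps force
    \<open>\<nabla>g(\<mu>)\<^sub>i \<le> 0\<close>, and if \<open>\<mu>\<^sub>i > 0\<close> negative steps force \<open>\<nabla>g(\<mu>)\<^sub>i \<ge> 0\<close>.\<close>
  have step: "s * ?g $ i \<le> s\<^sup>2 / 2 * K i" if "0 \<le> mu $ i + s" for i s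
  proof -
    have "nonneg_vec (mu + s *\<^sub>R axis i 1)"
      using mu that unfolding nonneg_vec_def by (auto simp: axis_def)
    then have "dual_fun Q A b c (mu + s *\<^sub>R axis i 1) \<le> dual_fun Q A b c mu"
      using opt unfolding dual_optimal_def by blast
    then show ?thesis
      using dual_fun_axis_step[OF Q, of A b c mu s i] unfolding K_def by simp
  qed
  have grad: "?g $ i \<le> 0" for i
    using mu step by (intro nonpos_if_le_quadratic[OF K[of i] zero_less_one]) (simp add: nonneg_vec_def)
  have "mu $ i * ?g $ i = 0" for i
  proof (rule ccontr)
    assume "mu $ i * ?g $ i \<noteq> 0"
    then have "0 < mu $ i"
      using mu unfolding nonneg_vec_def by (metis less_eq_real_def mult_zero_left)
    have "- ?g $ i \<le> 0"
      using step[of i "- _"] by (intro nonpos_if_le_quadratic[OF K[of i] \<open>0 < mu $ i\<close>]) simp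
    then show False
      using grad[of i] \<open>mu $ i * ?g $ i \<noteq> 0\<close> by simp
  qed
  with mu grad show ?thesis
    unfolding dual_kkt_def by blast
qed

lemma dual_kkt_imp_dual_optimal:
  fixes Q :: "real^'n^'n" and A :: "real^'n^'m"
  assumes Q: "sym_pos_def_mat Q" and kkt: "dual_kkt Q A b c mu"
  shows "dual_optimal Q A b c mu"
  unfolding dual_optimal_def
proof (intro conjI allI impI)
  let ?g = "dual_grad Q A b c mu"
  show "nonneg_vec mu"
    using kkt unfolding dual_kkt_def by blast
  fix nu :: "real^'m"
  assume "nonneg_vec nu"
  then have "?g \<bullet> nu \<le> 0"
    using kkt unfolding inner_vec_def dual_kkt_def nonneg_vec_def
    by (auto intro!: sum_nonpos simp: mult_nonpos_nonneg)
  moreover have "?g \<bullet> mu = 0"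
    using kkt by (rule dual_kkt_complementary)
  moreover have "0 \<le> (transpose A *v (nu - mu)) \<bullet> (matrix_inv Q *v (transpose A *v (nu - mu)))"
    by (rule sym_pos_def_mat_nonneg[OF sym_pos_def_mat_matrix_inv[OF Q]])
  ultimately show "dual_fun Q A b c nu \<le> dual_fun Q A b c mu"
    using dual_fun_expansion[OF Q, of A b c nu mu] by (simp add: inner_diff_right)
qed

lemma dual_optimal_iff_dual_kkt:
  "sym_pos_def_mat Q \<Longrightarrow> dual_optimal Q A b c mu \<longleftrightarrow> dual_kkt Q A b c mu"
  using dual_optimal_imp_dual_kkt dual_kkt_imp_dual_optimal by blast

lemma qp_obj_expansion:
  assumes "transpose Q = Q"
  shows "qp_obj Q c z = qp_obj Q c y + (z - y) \<bullet> (Q *v y + c) + 1/2 * ((z - y) \<bullet> (Q *v (z - y)))"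
proof -
  define h where "h = z - y"
  have "y \<bullet> (Q *v h) = h \<bullet> (Q *v y)"
    using symmetric_matrix_inner_commute[OF assms] inner_commute by metis
  then have "qp_obj Q c (y + h) = qp_obj Q c y + h \<bullet> (Q *v y + c) + 1/2 * (h \<bullet> (Q *v h))"
    unfolding qp_obj_def by (simp add: algebra_simps inner_commute[of c h])
  then show ?thesis
    by (simp add: h_def)
qed

lemma qp_optimal_iff_eq_dual_to_primal:
  fixes Q :: "real^'n^'n" and A :: "real^'n^'m"
  assumes Q: "sym_pos_def_mat Q" and kkt: "dual_kkt Q A b c mu"
  shows "qp_optimal Q A b c x \<longleftrightarrow> x = dual_to_primal Q A c mu"
proof -
  define y where "y = dual_to_primal Q A c mu"
  have feasible: "qp_feasible A b y"
    using kkt unfolding dual_kkt_def qp_feasible_def dual_grad_eq_residual y_def by simp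
  have gap: "qp_obj Q c y + 1/2 * ((z - y) \<bullet> (Q *v (z - y))) \<le> qp_obj Q c z"
    if "qp_feasible A b z" for z
  proof -
    have "(z - y) \<bullet> (Q *v y + c) = dual_grad Q A b c mu \<bullet> mu - (A *v z - b) \<bullet> mu"
      unfolding y_def matrix_vector_mult_dual_to_primal[OF Q] dual_grad_eq_residual
      by (simp add: inner_matrix_vector_transpose inner_diff_left matrix_vector_mult_diff_distrib)
    also have "\<dots> = - ((A *v z - b) \<bullet> mu)"
      using dual_kkt_complementary[OF kkt] by simp
    also have "\<dots> \<ge> 0"
      using kkt that unfolding dual_kkt_def nonneg_vec_def qp_feasible_def inner_vec_def
      by (auto intro!: sum_nonpos simp: mult_nonpos_nonneg)
    finally show ?thesis
      using qp_obj_expansion[of Q c z y] Q unfolding sym_pos_def_mat_def by simp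
  qed
  have "qp_optimal Q A b c y"
    unfolding qp_optimal_def
  proof (intro conjI allI impI feasible)
    fix z
    assume "qp_feasible A b z"
    with gap sym_pos_def_mat_nonneg[OF Q, of "z - y"] show "qp_obj Q c y \<le> qp_obj Q c z"
      by fastforce
  qed
  moreover have "x = y" if "qp_optimal Q A b c x"
  proof (rule ccontr)
    assume "x \<noteq> y"
    then have "0 < (x - y) \<bullet> (Q *v (x - y))"
      using Q unfolding sym_pos_def_mat_def by simp
    moreover have "qp_obj Q c x \<le> qp_obj Q c y" "qp_feasible A b x"
      using that feasible unfolding qp_optimal_def by auto
    ultimately show False
      using gap[of x] by simp
  qed
  ultimately show ?thesis
    unfolding y_def by blast
qed

lemma dual_kkt_vsign_pos_iff:
  assumes "dual_kkt Q A b c mu"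
  shows "0 < vsign (mu + dual_grad Q A b c mu) $ i \<longleftrightarrow> 0 < mu $ i"
proof -
  have "0 \<le> mu $ i" "dual_grad Q A b c mu $ i \<le> 0" "mu $ i * dual_grad Q A b c mu $ i = 0"
    using assms unfolding dual_kkt_def nonneg_vec_def by auto
  then show ?thesis
    unfolding vsign_def by (cases "mu $ i = 0") (auto simp: sgn_if)
qed

lemma dual_kkt_eq_zero_if_vsign_nonpos:
  assumes "dual_kkt Q A b c mu" and "\<forall>i. \<not> 0 < vsign (mu + dual_grad Q A b c mu) $ i"
  shows "mu = 0"
proof -
  have "mu $ i = 0" for i
    using assms dual_kkt_vsign_pos_iff[OF assms(1), of i]
    unfolding dual_kkt_def nonneg_vec_def by (metis less_eq_real_def)
  then show ?thesis
    by (simp add: vec_eq_iff)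
qed

lemma dual_kkt_shift_active:
  fixes Q :: "real^'n^'n" and A :: "real^'n^'m"
  assumes kkt: "dual_kkt Q A b c mu" and active: "0 < mu $ i"
  defines "mu' \<equiv> mu + axis i 1" and "c' \<equiv> c - row i A"
  shows "dual_kkt Q A b c' mu'"
    and "dual_to_primal Q A c' mu' = dual_to_primal Q A c mu"
    and "vsign (mu' + dual_grad Q A b c' mu') = vsign (mu + dual_grad Q A b c mu)"
proof -
  have same: "transpose A *v mu' + c' = transpose A *v mu + c"
    unfolding mu'_def c'_def
    by (simp del: transpose_matrix_vector add: matrix_vector_right_distrib transpose_matrix_vector_axis)
  then show "dual_to_primal Q A c' mu' = dual_to_primal Q A c mu"
    unfolding dual_to_primal_def by simp
  have grad: "dual_grad Q A b c' mu' = dual_grad Q A b c mu"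
    unfolding dual_grad_def same ..
  have "dual_grad Q A b c mu $ i = 0"
    using kkt active unfolding dual_kkt_def by (metis less_irrefl mult_eq_0_iff)
  then show "dual_kkt Q A b c' mu'"
    using kkt active unfolding dual_kkt_def grad unfolding mu'_def nonneg_vec_def by (auto simp: axis_def)
  show "vsign (mu' + dual_grad Q A b c' mu') = vsign (mu + dual_grad Q A b c mu)"
    using \<open>dual_grad Q A b c mu $ i = 0\<close> active
    unfolding grad unfolding vsign_def mu'_def by (auto simp: vec_eq_iff axis_def)
qed

lemma cost_eq_if_no_active_constraint:
  fixes Q :: "real^'n^'n" and A :: "real^'n^'m"
  assumes Q: "sym_pos_def_mat Q" and kkt: "dual_kkt Q A b c mu" and kkt': "dual_kkt Q A b' c' mu'"
    and primal: "dual_to_primal Q A c' mu' = dual_to_primal Q A c mu"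
    and sign: "vsign (mu' + dual_grad Q A b' c' mu') = vsign (mu + dual_grad Q A b c mu)"
    and inactive: "\<forall>i. \<not> 0 < vsign (mu + dual_grad Q A b c mu) $ i"
  shows "c' = c"
proof -
  have "mu = 0" "mu' = 0"
    using dual_kkt_eq_zero_if_vsign_nonpos[OF kkt] dual_kkt_eq_zero_if_vsign_nonpos[OF kkt']
      sign inactive by auto
  then have "- c' = - c"
    using matrix_vector_mult_dual_to_primal[OF Q] primal by (metis add_0 vec.zero)
  then show ?thesis by simp
qed

lemma other_cost_if_active_constraint:
  fixes Q :: "real^'n^'n" and A :: "real^'n^'m"
  assumes Q: "sym_pos_def_mat Q" and A: "no_zero_rows A"
    and kkt: "dual_kkt Q A b c mu" and active: "0 < mu $ i"
  shows "\<exists>c' mu'. c' \<noteq> c \<and> qp_optimal Q A b c' (dual_to_primal Q A c mu) \<and> dual_optimal Q A b c' mu'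
           \<and> vsign (mu' + dual_grad Q A b c' mu') = vsign (mu + dual_grad Q A b c mu)"
proof -
  note shift = dual_kkt_shift_active[OF kkt active]
  have "c - row i A \<noteq> c"
    using A unfolding no_zero_rows_def by simp
  moreover have "qp_optimal Q A b (c - row i A) (dual_to_primal Q A c mu)"
    using qp_optimal_iff_eq_dual_to_primal[OF Q shift(1)] shift(2) by simp
  ultimately show ?thesis
    using dual_kkt_imp_dual_optimal[OF Q shift(1)] shift(3) by blast
qed

theorem proposition6:
  fixes Q :: "real^'n^'n" and A :: "real^'n^'m" and b :: "real^'m" and c :: "real^'n"
    and xstar :: "real^'n" and mustar :: "real^'m" and t :: "real^'m"
  assumes "sym_pos_def_mat Q"
    and "no_zero_rows A"
    and "qp_optimal Q A b c xstar"
    and "dual_optimal Q A b c mustar"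
    and "t = vsign (mustar + dual_grad Q A b c mustar)"
  shows "(\<exists>c' b' mu'. c' \<noteq> c \<and> qp_optimal Q A b' c' xstar \<and> dual_optimal Q A b' c' mu'
            \<and> vsign (mu' + dual_grad Q A b' c' mu') = t)
         \<longleftrightarrow> (\<exists>i. t $ i > 0)"
    (is "(\<exists>c' b' mu'. ?other c' b' mu') \<longleftrightarrow> ?active")
proof -
  note Q = assms(1)
  have kkt: "dual_kkt Q A b c mustar"
    using assms(4) dual_optimal_iff_dual_kkt[OF Q] by blast
  have xstar: "xstar = dual_to_primal Q A c mustar"
    using assms(3) qp_optimal_iff_eq_dual_to_primal[OF Q kkt] by blast
  show ?thesis
  proof
    assume "\<exists>c' b' mu'. ?other c' b' mu'"
    then obtain c' b' mu' where "c' \<noteq> c" "qp_optimal Q A b' c' xstar"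
      and kkt': "dual_kkt Q A b' c' mu'" and t': "vsign (mu' + dual_grad Q A b' c' mu') = t"
      using dual_optimal_iff_dual_kkt[OF Q] by blast
    moreover have "xstar = dual_to_primal Q A c' mu'"
      using calculation(2) qp_optimal_iff_eq_dual_to_primal[OF Q kkt'] by blast
    ultimately show ?active
      using cost_eq_if_no_active_constraint[OF Q kkt kkt'] xstar assms(5) by auto
  next
    assume ?active
    then obtain i where "0 < mustar $ i"
      using dual_kkt_vsign_pos_iff[OF kkt] assms(5) by blast
    then show "\<exists>c' b' mu'. ?other c' b' mu'"
      using other_cost_if_active_constraint[OF Q assms(2) kkt] xstar assms(5) by blast
  qed
qed

end
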